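(* Let $m\ge 1$ and $n\ge m+1$. Regarding $\mathbb{C}^m$ as the affine part of $\mathbb{P}^m$, the inclusion $X_n^m\hookrightarrow Y_n^m$ induces a surjective homomorphism $P_n^m=\pi_1(X_n^m)\to Q_n^m=\pi_1(Y_n^m)$.
   Context: For $m\ge1$, $n\ge m+1$: $X_n^m$ is the space of ordered $n$-tuples $(x_1,\dots,x_n)$ of points of $\mathbb{C}^m$ such that every $m+1$ of the points affinely span all of $\mathbb{C}^m$ (equivalently, every $(m+1)\times(m+1)$ minor of the $(m+1)\times n$ matrix whose $i$-th column is $(1,x_i)^T$ is nonzero). $Y_n^m$ is the space of ordered $n$-tuples of points of $\mathbb{P}^m$ such that every $m+1$ of the points span $\mathbb{P}^m$ projectively. $P_n^m=\pi_1(X_n^m)$ and $Q_n^m=\pi_1(Y_n^m)$. Note $X_n^m\subset Y_n^m$ via $\mathbb{C}^m\subset\mathbb{P}^m$. *)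

theory Defs
  imports "HOL-Analysis.Analysis"
begin

definition cline :: "complex^'k \<Rightarrow> (complex^'k) set" where
  "cline v = {c *s v | c. True}"

definition projsp :: "(complex^'k) set set" where
  "projsp = {cline v | v. v \<noteq> 0}"

text \<open>Quotient topology from C^k minus 0 (an open set, so open there = open).\<close>
definition proj_topology :: "(complex^'k) set topology" where
  "proj_topology = topology (\<lambda>U. U \<subseteq> projsp \<and> open {v. v \<noteq> 0 \<and> cline v \<in> U})"

definition caff_hull :: "(complex^'m)^'n \<Rightarrow> 'n set \<Rightarrow> (complex^'m) set" where
  "caff_hull x S = {y. \<exists>c. sum c S = 1 \<and> y = (\<Sum>i\<in>S. c i *s x$i)}"

text \<open>m = CARD('m), n = CARD('n); C^m = complex^'m, P^m = lines in complex^('m::finite option).\<close>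

definition Xsp :: "((complex^'m::finite)^'n::finite) set" where
  "Xsp = {x. \<forall>S. card S = CARD('m) + 1 \<longrightarrow> caff_hull x S = UNIV}"

definition Ysp :: "('n::finite \<Rightarrow> (complex^('m::finite option)) set) set" where
  "Ysp = {L. (\<forall>i. L i \<in> projsp) \<and>
             (\<forall>S. card S = CARD('m) + 1 \<longrightarrow> vec.span (\<Union>i\<in>S. L i) = UNIV)}"

definition Ytop :: "('n::finite \<Rightarrow> (complex^('m::finite option)) set) topology" where
  "Ytop = subtopology (product_topology (\<lambda>i. proj_topology) UNIV) Ysp"

definition Xtop :: "((complex^'m::finite)^'n::finite) topology" where
  "Xtop = subtopology euclidean Xsp"

text \<open>Standard affine chart C^m -> P^m, x |-> [1 : x].\<close>
definition aff_embed :: "complex^'m \<Rightarrow> complex^('m::finite option)" where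
  "aff_embed v = (\<chi> i. case i of None \<Rightarrow> 1 | Some j \<Rightarrow> v$j)"

definition incl_XY :: "(complex^'m::finite)^'n::finite \<Rightarrow> ('n \<Rightarrow> (complex^('m::finite option)) set)" where
  "incl_XY x = (\<lambda>i. cline (aff_embed (x$i)))"

definition loop_in :: "'a topology \<Rightarrow> 'a \<Rightarrow> (real \<Rightarrow> 'a) \<Rightarrow> bool" where
  "loop_in T a p \<longleftrightarrow> pathin T p \<and> p 0 = a \<and> p 1 = a"

definition homotopic_loops_in :: "'a topology \<Rightarrow> 'a \<Rightarrow> (real \<Rightarrow> 'a) \<Rightarrow> (real \<Rightarrow> 'a) \<Rightarrow> bool" where
  "homotopic_loops_in T a p q \<longleftrightarrow>
     homotopic_with (\<lambda>h. h 0 = a \<and> h 1 = a) (top_of_set {0..1}) T p q"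

text \<open>f_* : pi_1(A,a) -> pi_1(B,f a) is surjective: every loop class at f a contains f o p.\<close>
definition pi1_surjective :: "'a topology \<Rightarrow> 'b topology \<Rightarrow> ('a \<Rightarrow> 'b) \<Rightarrow> 'a \<Rightarrow> bool" where
  "pi1_surjective A B f a \<longleftrightarrow>
     (\<forall>q. loop_in B (f a) q \<longrightarrow> (\<exists>p. loop_in A a p \<and> homotopic_loops_in B (f a) (f \<circ> p) q))"

end

theory Submission
  imports Defs
begin

text \<open>
  For \<open>l \<in> \<complex>\<^sup>m\<close> the shear \<open>(v\<^sub>0, v) \<mapsto> (v\<^sub>0 + l \<bullet> v, v)\<close> is a linear automorphism of
  \<open>\<complex>\<^sup>m \<times> \<complex>\<close>, so it preserves \<open>Y\<close>, and it sends the hyperplane \<open>v\<^sub>0 + l \<bullet> v = 0\<close> to the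
  hyperplane at infinity. Given a loop \<open>q\<close> in \<open>Y\<close>, the pairs \<open>(t, l)\<close> for which no point of
  \<open>q t\<close> lies on that hyperplane form an open subset of \<open>\<real> \<times> \<complex>\<^sup>m\<close> whose fibres are complements
  of finitely many proper affine hyperplanes of \<open>\<complex>\<^sup>m\<close>, hence nonempty and connected. So this set
  is path connected and contains a path \<open>(\<tau>, \<mu>)\<close> from \<open>(0, 0)\<close> to \<open>(1, 0)\<close>. The configurations
  \<open>shear (\<mu> u) (q (\<tau> u))\<close> are affine, i.e. they form a loop in \<open>X\<close>, and shrinking \<open>\<mu>\<close> to \<open>0\<close>
  while straightening \<open>\<tau>\<close> to the identity deforms its image into \<open>q\<close>.
\<close>

lemma istopology_proj:
  "istopology (\<lambda>U. U \<subseteq> (projsp :: (complex^'k) set set) \<and> open {v. v \<noteq> 0 \<and> cline v \<in> U})"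
proof -
  have Int: "{v. v \<noteq> 0 \<and> cline v \<in> S \<inter> T} = {v. v \<noteq> 0 \<and> cline v \<in> S} \<inter> {v. v \<noteq> 0 \<and> cline v \<in> T}"
    and Union: "{v. v \<noteq> 0 \<and> cline v \<in> \<Union>K} = (\<Union>U\<in>K. {v. v \<noteq> 0 \<and> cline v \<in> U})"
    for S T :: "(complex^'k) set set" and K
    by auto
  show ?thesis
    unfolding istopology_def Int Union
    by (simp add: le_infI1 Sup_le_iff open_Int open_UN)
qed

lemma openin_proj_topology:
  "openin proj_topology U \<longleftrightarrow> U \<subseteq> projsp \<and> open {v. v \<noteq> 0 \<and> cline v \<in> U}"
  unfolding proj_topology_def topology_inverse'[OF istopology_proj] ..

lemma mem_cline: "w \<in> cline v \<longleftrightarrow> (\<exists>c. w = c *s v)"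
  unfolding cline_def by auto

lemma cline_self: "v \<in> cline v"
  unfolding mem_cline by (metis vector_smult_lid)

lemma cline_scale:
  assumes "c \<noteq> 0"
  shows "cline (c *s v) = cline v"
proof (rule set_eqI)
  fix w
  show "w \<in> cline (c *s v) \<longleftrightarrow> w \<in> cline v"
    unfolding mem_cline vector_smult_assoc
  proof
    assume "\<exists>d. w = (d * c) *s v"
    then show "\<exists>e. w = e *s v"
      by blast
  next
    assume "\<exists>e. w = e *s v"
    then obtain e where "w = e *s v"
      by blast
    then have "w = (e / c * c) *s v"
      using assms by simp
    then show "\<exists>d. w = (d * c) *s v"
      by blast
  qed
qed

lemma cline_in_projsp: "v \<noteq> 0 \<Longrightarrow> cline v \<in> projsp"
  unfolding projsp_def by auto

lemma projspE:
  assumes "L \<in> projsp"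
  obtains v where "v \<noteq> 0" and "L = cline v"
  using assms unfolding projsp_def by auto

lemma topspace_proj_topology: "topspace (proj_topology :: (complex^'k) set topology) = projsp"
proof -
  have "{v. v \<noteq> 0 \<and> cline v \<in> projsp} = - {0 :: complex^'k}"
    using cline_in_projsp by auto
  then have "openin proj_topology (projsp :: (complex^'k) set set)"
    by (simp add: openin_proj_topology open_Compl closed_singleton)
  then show ?thesis
    by (metis openin_subset openin_topspace openin_proj_topology subset_antisym)
qed

lemma continuous_map_cline:
  fixes w :: "'a \<Rightarrow> complex^'k"
  assumes "continuous_map X euclidean w" and "\<And>x. x \<in> topspace X \<Longrightarrow> w x \<noteq> 0"
  shows "continuous_map X proj_topology (\<lambda>x. cline (w x))"
  unfolding continuous_map_def
proof (intro conjI allI impI)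
  show "(\<lambda>x. cline (w x)) \<in> topspace X \<rightarrow> topspace proj_topology"
    using assms(2) cline_in_projsp by (auto simp: topspace_proj_topology)
  fix U :: "(complex^'k) set set"
  assume "openin proj_topology U"
  then have "openin X {x \<in> topspace X. w x \<in> {v. v \<noteq> 0 \<and> cline v \<in> U}}"
    by (intro openin_continuous_map_preimage[OF assms(1)]) (simp add: openin_proj_topology)
  moreover have "{x \<in> topspace X. cline (w x) \<in> U} = {x \<in> topspace X. w x \<in> {v. v \<noteq> 0 \<and> cline v \<in> U}}"
    using assms(2) by auto
  ultimately show "openin X {x \<in> topspace X. cline (w x) \<in> U}"
    by (simp only:)
qed

lemma continuous_map_proj_topology_locally:
  assumes "\<And>x. x \<in> topspace X \<Longrightarrow> \<exists>W w. openin X W \<and> x \<in> W \<and>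
             continuous_map (subtopology X W) euclidean w \<and> (\<forall>y\<in>W. w y \<noteq> 0 \<and> f y = cline (w y))"
  shows "continuous_map X proj_topology f"
proof (rule pasting_lemma[where I = "{W. openin X W \<and> continuous_map (subtopology X W) proj_topology f}"
      and T = id and f = "\<lambda>_. f"])
  fix x
  assume "x \<in> topspace X"
  then obtain W w where W: "openin X W" "x \<in> W" "continuous_map (subtopology X W) euclidean w"
      and f: "\<forall>y\<in>W. w y \<noteq> 0 \<and> f y = cline (w y)"
    using assms by meson
  have "continuous_map (subtopology X W) proj_topology (\<lambda>y. cline (w y))"
    using W(3) f by (intro continuous_map_cline) auto
  then have "continuous_map (subtopology X W) proj_topology f"
    by (rule continuous_map_eq) (use f in auto)
  with W(1,2) show "\<exists>W. W \<in> {W. openin X W \<and> continuous_map (subtopology X W) proj_topology f} \<and> x \<in> id W \<and> f x = f x"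
    by auto
qed simp_all

definition proj_chart :: "'k \<Rightarrow> (complex^'k) set set" where
  "proj_chart k = {cline v | v. v $ k \<noteq> 0}"

definition chart_rep :: "'k \<Rightarrow> (complex^'k) set \<Rightarrow> complex^'k" where
  "chart_rep k L = (SOME w. w \<in> L \<and> w $ k = 1)"

lemma cline_in_proj_chart_iff: "cline v \<in> proj_chart k \<longleftrightarrow> v $ k \<noteq> 0"
proof
  assume "cline v \<in> proj_chart k"
  then obtain w where "cline v = cline w" "w $ k \<noteq> 0"
    unfolding proj_chart_def by blast
  then have "w \<in> cline v"
    using cline_self[of w] by simp
  then show "v $ k \<noteq> 0"
    using \<open>w $ k \<noteq> 0\<close> by (auto simp: mem_cline)
qed (auto simp: proj_chart_def)

lemma chart_rep_cline:
  assumes "v $ k \<noteq> 0"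
  shows "chart_rep k (cline v) = (1 / v $ k) *s v"
  unfolding chart_rep_def
proof (rule some_equality)
  show "(1 / v $ k) *s v \<in> cline v \<and> ((1 / v $ k) *s v) $ k = 1"
    using assms by (auto simp: mem_cline)
  show "w = (1 / v $ k) *s v" if "w \<in> cline v \<and> w $ k = 1" for w
    using that assms by (auto simp: mem_cline field_simps)
qed

lemma
  assumes "L \<in> proj_chart k"
  shows cline_chart_rep: "cline (chart_rep k L) = L"
    and chart_rep_nth: "chart_rep k L $ k = 1"
proof -
  obtain v where v: "L = cline v" "v $ k \<noteq> 0"
    using assms unfolding proj_chart_def by blast
  then show "cline (chart_rep k L) = L" "chart_rep k L $ k = 1"
    by (simp_all add: chart_rep_cline cline_scale)
qed

lemma proj_chart_subset: "proj_chart k \<subseteq> projsp"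
  unfolding proj_chart_def by (auto intro: cline_in_projsp)

lemma proj_chart_cover:
  assumes "L \<in> projsp"
  obtains k where "L \<in> proj_chart k"
proof -
  obtain v where "v \<noteq> 0" "L = cline v"
    using assms by (rule projspE)
  moreover obtain k where "v $ k \<noteq> 0"
    using \<open>v \<noteq> 0\<close> by (metis vec_eq_iff zero_index)
  ultimately show thesis
    using that cline_in_proj_chart_iff by blast
qed

lemma open_vec_nth_nonzero: "open {v :: 'a::{real_normed_field}^'k. v $ k \<noteq> 0}"
  by (intro open_Collect_neq continuous_intros)

lemma openin_proj_chart: "openin proj_topology (proj_chart (k :: 'k::finite))"
proof -
  have "{v. v \<noteq> 0 \<and> cline v \<in> proj_chart k} = {v. v $ k \<noteq> 0}"
    by (auto simp: cline_in_proj_chart_iff)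
  then show ?thesis
    using open_vec_nth_nonzero by (simp add: openin_proj_topology proj_chart_subset)
qed

lemma continuous_on_vector_smult [continuous_intros]:
  fixes a :: "'a::topological_space \<Rightarrow> 'b::real_normed_field"
  assumes "continuous_on S a" and "continuous_on S b"
  shows "continuous_on S (\<lambda>x. a x *s b x)"
proof -
  have "continuous_on S (\<lambda>x. \<chi> j. a x * b x $ j)"
    using assms by (intro continuous_intros)
  then show ?thesis
    by (simp add: vector_scalar_mult_def)
qed

lemma continuous_map_chart_rep:
  "continuous_map (subtopology proj_topology (proj_chart (k :: 'k::finite))) euclidean (chart_rep k)"
  unfolding continuous_map_def
proof (intro conjI allI impI)
  show "chart_rep k \<in> topspace (subtopology proj_topology (proj_chart k)) \<rightarrow> topspace euclidean"
    by simp
  fix W :: "(complex^'k) set"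
  assume "openin euclidean W"
  define U where "U = {L \<in> proj_chart k. chart_rep k L \<in> W}"
  have "{v. v \<noteq> 0 \<and> cline v \<in> U} = {v. v $ k \<noteq> 0} \<inter> (\<lambda>v. (1 / v $ k) *s v) -` W"
    by (auto simp: U_def cline_in_proj_chart_iff chart_rep_cline)
  moreover have "continuous_on {v. v $ k \<noteq> 0} (\<lambda>v :: complex^'k. (1 / v $ k) *s v)"
    by (intro continuous_intros) auto
  then have "open ({v. v $ k \<noteq> 0} \<inter> (\<lambda>v. (1 / v $ k) *s v) -` W)"
    by (rule continuous_open_preimage[OF _ open_vec_nth_nonzero]) (use \<open>openin euclidean W\<close> in simp)
  ultimately have "open {v. v \<noteq> 0 \<and> cline v \<in> U}"
    by simp
  then have "openin proj_topology U"
    using proj_chart_subset by (auto simp: openin_proj_topology U_def)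
  moreover have "{L \<in> topspace (subtopology proj_topology (proj_chart k)). chart_rep k L \<in> W} = U \<inter> proj_chart k"
    using proj_chart_subset by (auto simp: U_def topspace_proj_topology)
  ultimately show "openin (subtopology proj_topology (proj_chart k))
      {L \<in> topspace (subtopology proj_topology (proj_chart k)). chart_rep k L \<in> W}"
    by (auto simp: openin_subtopology)
qed

lemma continuous_map_proj_topology_lift:
  fixes Q :: "'a \<Rightarrow> (complex^'k::finite) set"
  assumes "continuous_map X proj_topology Q" and "x \<in> topspace X"
  obtains k where "openin X {y \<in> topspace X. Q y \<in> proj_chart k}"
    and "Q x \<in> proj_chart k"
    and "continuous_map (subtopology X {y \<in> topspace X. Q y \<in> proj_chart k}) euclidean (\<lambda>y. chart_rep k (Q y))"
proof -
  have "Q x \<in> projsp"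
    using assms continuous_map_image_subset_topspace topspace_proj_topology by fastforce
  then obtain k where k: "Q x \<in> proj_chart k"
    by (rule proj_chart_cover)
  let ?W = "{y \<in> topspace X. Q y \<in> proj_chart k}"
  have "continuous_map (subtopology X ?W) (subtopology proj_topology (proj_chart k)) Q"
    using assms(1) by (auto simp: continuous_map_in_subtopology continuous_map_from_subtopology)
  then have "continuous_map (subtopology X ?W) euclidean (chart_rep k \<circ> Q)"
    using continuous_map_chart_rep by (rule continuous_map_compose)
  then show thesis
    using that k openin_continuous_map_preimage[OF assms(1) openin_proj_chart] by (simp add: o_def)
qed

text \<open>Coordinate \<open>None\<close> is the homogenising one, as in \<open>aff_embed\<close>.\<close>

definition shear_form :: "complex^'m \<Rightarrow> complex^('m option) \<Rightarrow> complex" where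
  "shear_form l v = v $ None + (\<Sum>j\<in>UNIV. l $ j * v $ Some j)"

definition shear :: "complex^'m \<Rightarrow> complex^('m option) \<Rightarrow> complex^('m option)" where
  "shear l v = (\<chi> k. case k of None \<Rightarrow> shear_form l v | Some j \<Rightarrow> v $ Some j)"

lemma shear_None [simp]: "shear l v $ None = shear_form l v"
  by (simp add: shear_def)

lemma shear_Some [simp]: "shear l v $ Some j = v $ Some j"
  by (simp add: shear_def)

lemma vec_option_eq_iff:
  fixes x y :: "'a^('m::finite option)"
  shows "x = y \<longleftrightarrow> x $ None = y $ None \<and> (\<forall>j. x $ Some j = y $ Some j)"
  by (metis option.exhaust vec_eq_iff)

lemma shear_scale: "shear l (c *s v) = c *s shear l v"
  by (simp add: vec_option_eq_iff shear_form_def sum_distrib_left algebra_simps)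

lemma shear_add: "shear l (v + w) = shear l v + shear l w"
  by (simp add: vec_option_eq_iff shear_form_def sum.distrib algebra_simps)

lemma linear_shear: "Vector_Spaces.linear (*s) (*s) (shear l)"
  unfolding Vector_Spaces.linear_iff by (simp add: shear_add shear_scale vec.vector_space_axioms)

lemma shear_neg_shear: "shear (- l) (shear l v) = v"
  by (simp add: vec_option_eq_iff shear_form_def sum_negf algebra_simps)

lemma shear_zero [simp]: "shear 0 = id"
  by (simp add: fun_eq_iff vec_option_eq_iff shear_form_def)

lemma shear_nonzero: "v \<noteq> 0 \<Longrightarrow> shear l v \<noteq> 0"
  by (metis shear_neg_shear shear_scale vector_smult_lzero)

lemma surj_shear: "surj (shear l)"
  by (metis shear_neg_shear minus_minus surjI)

lemma shear_image_cline: "shear l ` cline v = cline (shear l v)"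
  unfolding cline_def setcompr_eq_image image_image by (simp add: shear_scale)

lemma shear_image_projsp: "L \<in> projsp \<Longrightarrow> shear l ` L \<in> projsp"
  by (metis projspE cline_in_projsp shear_image_cline shear_nonzero)

lemma shear_image_Ysp:
  fixes L :: "'n::finite \<Rightarrow> (complex^('m::finite option)) set"
  assumes "L \<in> Ysp"
  shows "(\<lambda>i. shear l ` L i) \<in> Ysp"
proof -
  have "vec.span (\<Union>i\<in>S. shear l ` L i) = UNIV" if "card S = CARD('m) + 1" for S
  proof -
    have "vec.span (\<Union>i\<in>S. shear l ` L i) = shear l ` vec.span (\<Union>i\<in>S. L i)"
      by (simp add: vec.linear_span_image[OF linear_shear, symmetric] image_UN)
    also have "\<dots> = UNIV"
      using assms that surj_shear unfolding Ysp_def by auto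
    finally show ?thesis .
  qed
  then show ?thesis
    using assms shear_image_projsp unfolding Ysp_def by blast
qed

lemma shear_image_cline_in_chart_iff: "shear l ` cline v \<in> proj_chart None \<longleftrightarrow> shear_form l v \<noteq> 0"
  by (simp add: shear_image_cline cline_in_proj_chart_iff)

lemma continuous_on_shear [continuous_intros]:
  assumes "continuous_on S a" and "continuous_on S b"
  shows "continuous_on S (\<lambda>y. shear (a y) (b y))"
proof -
  have "continuous_on S (\<lambda>y. shear (a y) (b y) $ k)" for k
    using assms by (cases k) (auto simp: shear_form_def intro!: continuous_intros)
  then have "continuous_on S (\<lambda>y. \<chi> k. shear (a y) (b y) $ k)"
    by (rule continuous_on_vec_lambda)
  then show ?thesis
    by simp
qed

lemma continuous_map_shear_image:
  assumes Q: "continuous_map X proj_topology Q" and lam: "continuous_map X euclidean lam"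
  shows "continuous_map X proj_topology (\<lambda>y. shear (lam y) ` Q y)"
proof (rule continuous_map_proj_topology_locally)
  fix x
  assume "x \<in> topspace X"
  obtain k where W: "openin X {y \<in> topspace X. Q y \<in> proj_chart k}" "Q x \<in> proj_chart k"
    and rep: "continuous_map (subtopology X {y \<in> topspace X. Q y \<in> proj_chart k}) euclidean (\<lambda>y. chart_rep k (Q y))"
    by (rule continuous_map_proj_topology_lift[OF Q \<open>x \<in> topspace X\<close>])
  let ?W = "{y \<in> topspace X. Q y \<in> proj_chart k}"
  let ?w = "\<lambda>y. shear (lam y) (chart_rep k (Q y))"
  have "continuous_map (subtopology X ?W) (prod_topology euclidean euclidean) (\<lambda>y. (lam y, chart_rep k (Q y)))"
    by (intro continuous_map_pairedI continuous_map_from_subtopology lam rep)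
  then have "continuous_map (subtopology X ?W) euclidean ((\<lambda>p. shear (fst p) (snd p)) \<circ> (\<lambda>y. (lam y, chart_rep k (Q y))))"
    by (rule continuous_map_compose)
      (simp add: continuous_on_shear continuous_on_fst continuous_on_snd continuous_on_id)
  then have "continuous_map (subtopology X ?W) euclidean ?w"
    by (simp add: o_def)
  moreover have "?w y \<noteq> 0 \<and> shear (lam y) ` Q y = cline (?w y)" if "y \<in> ?W" for y
  proof -
    have "chart_rep k (Q y) \<noteq> 0"
      using chart_rep_nth[of "Q y" k] that by (auto simp: zero_vec_def)
    moreover have "shear (lam y) ` Q y = cline (?w y)"
      using cline_chart_rep[of "Q y" k] that by (metis (no_types, lifting) mem_Collect_eq shear_image_cline)
    ultimately show ?thesis
      using shear_nonzero by blast
  qed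
  ultimately show "\<exists>W w. openin X W \<and> x \<in> W \<and> continuous_map (subtopology X W) euclidean w \<and>
      (\<forall>y\<in>W. w y \<noteq> 0 \<and> shear (lam y) ` Q y = cline (w y))"
    using W \<open>x \<in> topspace X\<close> by blast
qed

lemma shear_form_affine:
  "shear_form (x + z *s (y - x)) v = (1 - z) * shear_form x v + z * shear_form y v"
  by (simp add: shear_form_def algebra_simps sum.distrib sum_distrib_left sum_subtractf)

lemma finite_roots_affine_combination:
  fixes a b :: complex
  assumes "a \<noteq> 0 \<or> b \<noteq> 0"
  shows "finite {z. (1 - z) * a + z * b = 0}"
proof (cases "a = b")
  case True
  then show ?thesis
    using assms by (simp add: algebra_simps)
next
  case False
  then have "{z. (1 - z) * a + z * b = 0} \<subseteq> {a / (a - b)}"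
    by (auto simp: algebra_simps eq_divide_eq)
  then show ?thesis
    by (rule finite_subset) simp
qed

lemma finite_degenerate_shears_on_line:
  assumes "finite I" and "\<forall>i\<in>I. shear_form x (v i) \<noteq> 0 \<or> shear_form y (v i) \<noteq> 0"
  shows "finite {z. \<exists>i\<in>I. shear_form (x + z *s (y - x)) (v i) = 0}"
proof -
  have "{z. \<exists>i\<in>I. shear_form (x + z *s (y - x)) (v i) = 0}
      = (\<Union>i\<in>I. {z. (1 - z) * shear_form x (v i) + z * shear_form y (v i) = 0})"
    by (simp only: shear_form_affine) blast
  then show ?thesis
    using assms by (simp add: finite_roots_affine_combination)
qed

lemma exists_shear_form_nonzero:
  assumes "w \<noteq> 0"
  obtains l where "shear_form l w \<noteq> 0"
proof (cases "w $ None = 0")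
  case False
  then show thesis
    using that[of 0] by (simp add: shear_form_def)
next
  case True
  then obtain j where j: "w $ Some j \<noteq> 0"
    using assms by (metis vec_option_eq_iff zero_index)
  have "shear_form (axis j (1 / w $ Some j)) w = 1"
  proof -
    have "(\<Sum>j'\<in>UNIV. axis j (1 / w $ Some j) $ j' * w $ Some j') = (1 / w $ Some j) * w $ Some j"
      by (simp add: axis_def if_distrib[of "\<lambda>c. c * _"] cong: if_cong)
    then show ?thesis
      using True j by (simp add: shear_form_def)
  qed
  then show thesis
    using that by fastforce
qed

lemma exists_shear_avoiding:
  assumes "finite I" and "\<And>i. i \<in> I \<Longrightarrow> v i \<noteq> 0"
  shows "\<exists>l. \<forall>i\<in>I. shear_form l (v i) \<noteq> 0"
  using assms
proof (induction I rule: finite_induct)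
  case empty
  then show ?case
    by simp
next
  case (insert i0 I)
  obtain x where x: "\<forall>i\<in>I. shear_form x (v i) \<noteq> 0"
    using insert by auto
  obtain y where y: "shear_form y (v i0) \<noteq> 0"
    using exists_shear_form_nonzero insert.prems by blast
  have "finite {z. \<exists>i\<in>insert i0 I. shear_form (x + z *s (y - x)) (v i) = 0}"
    using x y insert.hyps(1) by (intro finite_degenerate_shears_on_line) auto
  then obtain z where "z \<notin> {z. \<exists>i\<in>insert i0 I. shear_form (x + z *s (y - x)) (v i) = 0}"
    using ex_new_if_finite[OF infinite_UNIV_char_0] by blast
  then show ?case
    by blast
qed

lemma path_connected_shears_avoiding:
  assumes "finite I"
  shows "path_connected {l. \<forall>i\<in>I. shear_form l (v i) \<noteq> 0}"
  unfolding path_connected_def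
proof (intro ballI)
  fix x y
  assume x: "x \<in> {l. \<forall>i\<in>I. shear_form l (v i) \<noteq> 0}" and y: "y \<in> {l. \<forall>i\<in>I. shear_form l (v i) \<noteq> 0}"
  define Z where "Z = {z. \<exists>i\<in>I. shear_form (x + z *s (y - x)) (v i) = 0}"
  have "finite Z"
    unfolding Z_def using assms x y by (intro finite_degenerate_shears_on_line) auto
  then have "path_connected (- Z)"
    by (intro path_connected_complement_countable countable_finite) auto
  moreover have "0 \<in> - Z" "1 \<in> - Z"
    using x y by (auto simp: Z_def)
  ultimately obtain g where g: "path g" "path_image g \<subseteq> - Z" "pathstart g = 0" "pathfinish g = 1"
    unfolding path_connected_def by blast
  define h where "h = (\<lambda>z. x + z *s (y - x)) \<circ> g"
  have "path h"
    unfolding h_def by (intro path_continuous_image g(1) continuous_intros)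
  moreover have "path_image h \<subseteq> {l. \<forall>i\<in>I. shear_form l (v i) \<noteq> 0}"
    using g(2) by (auto simp: h_def path_image_compose Z_def)
  moreover have "pathstart h = x" "pathfinish h = y"
    using g(3,4) by (simp_all add: h_def pathstart_def pathfinish_def)
  ultimately show "\<exists>h. path h \<and> path_image h \<subseteq> {l. \<forall>i\<in>I. shear_form l (v i) \<noteq> 0} \<and> pathstart h = x \<and> pathfinish h = y"
    by blast
qed

lemma path_connected_open_fibred:
  fixes G :: "(real \<times> 'a::real_normed_vector) set"
  assumes "open G" and "\<And>t. \<exists>y. (t, y) \<in> G" and "\<And>t. connected {y. (t, y) \<in> G}"
  shows "path_connected G"
proof -
  have fst_image: "fst ` (G \<inter> fst -` U) = U" for U
  proof
    show "U \<subseteq> fst ` (G \<inter> fst -` U)"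
    proof
      fix t
      assume "t \<in> U"
      moreover obtain y where "(t, y) \<in> G"
        using assms(2) by blast
      ultimately show "t \<in> fst ` (G \<inter> fst -` U)"
        by (metis IntI fst_conv image_eqI vimageI)
    qed
  qed auto
  have "connected G"
  proof (rule connected_monotone_quotient_preimage[where f = fst and T = UNIV])
    show "continuous_on G fst"
      by (intro continuous_on_fst continuous_on_id)
    show "fst ` G = UNIV"
      using fst_image[of UNIV] by simp
    show "openin (top_of_set G) (G \<inter> fst -` U) \<longleftrightarrow> openin (top_of_set UNIV) U" for U
    proof
      assume "openin (top_of_set G) (G \<inter> fst -` U)"
      then have "open (G \<inter> fst -` U)"
        using assms(1) by (rule openin_open_trans)
      then have "open (fst ` (G \<inter> fst -` U))"
        by (rule open_image_fst)
      then show "openin (top_of_set UNIV) U"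
        by (simp add: fst_image)
    next
      assume "openin (top_of_set UNIV) U"
      then show "openin (top_of_set G) (G \<inter> fst -` U)"
        by (intro continuous_openin_preimage_gen continuous_on_fst continuous_on_id) simp
    qed
    show "connected (G \<inter> fst -` {t})" for t
    proof -
      have "G \<inter> fst -` {t} = (\<lambda>y. (t, y)) ` {y. (t, y) \<in> G}"
        by auto
      moreover have "continuous_on {y. (t, y) \<in> G} (\<lambda>y. (t, y))"
        by (intro continuous_on_Pair continuous_on_const continuous_on_id)
      ultimately show ?thesis
        using assms(3) connected_continuous_image by metis
    qed
  qed simp
  then show ?thesis
    using assms(1) connected_open_path_connected by blast
qed

lemma aff_embed_None [simp]: "aff_embed x $ None = 1"
  by (simp add: aff_embed_def)

lemma aff_embed_Some [simp]: "aff_embed x $ Some j = x $ j"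
  by (simp add: aff_embed_def)

definition affine_shears :: "('n \<Rightarrow> (complex^('m::finite option)) set) \<Rightarrow> (complex^'m) set" where
  "affine_shears L = {l. \<forall>i. shear l ` L i \<in> proj_chart None}"

lemma zero_in_affine_shears_incl_XY: "0 \<in> affine_shears (incl_XY x)"
  by (simp add: affine_shears_def incl_XY_def cline_in_proj_chart_iff)

lemma
  fixes L :: "'n::finite \<Rightarrow> (complex^('m::finite option)) set"
  assumes "\<And>i. L i \<in> projsp"
  shows affine_shears_nonempty: "affine_shears L \<noteq> {}"
    and path_connected_affine_shears: "path_connected (affine_shears L)"
proof -
  have "\<forall>i. \<exists>w. w \<noteq> 0 \<and> L i = cline w"
    using assms by (meson projspE)
  then obtain v where v: "\<And>i. v i \<noteq> 0" "\<And>i. L i = cline (v i)"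
    by metis
  then have L: "affine_shears L = {l. \<forall>i\<in>UNIV. shear_form l (v i) \<noteq> 0}"
    by (simp add: affine_shears_def shear_image_cline_in_chart_iff)
  show "affine_shears L \<noteq> {}"
    using exists_shear_avoiding[of UNIV v] v(1) by (auto simp: L)
  show "path_connected (affine_shears L)"
    unfolding L by (rule path_connected_shears_avoiding) simp
qed

lemma open_affine_shears_graph:
  fixes L :: "'a::topological_space \<Rightarrow> 'n::finite \<Rightarrow> (complex^('m::finite option)) set"
  assumes "\<And>i. continuous_map euclidean proj_topology (\<lambda>t. L t i)"
  shows "open {(t, l). l \<in> affine_shears (L t)}"
proof -
  have "continuous_map euclidean proj_topology (\<lambda>x. shear (snd x) ` L (fst x) i)" for i
  proof (rule continuous_map_shear_image)
    show "continuous_map euclidean proj_topology (\<lambda>x. L (fst x) i)"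
      using continuous_map_compose[OF _ assms[of i], of euclidean fst]
      by (simp add: o_def continuous_on_fst continuous_on_id)
  qed (simp add: continuous_on_snd continuous_on_id)
  then have "open {x. shear (snd x) ` L (fst x) i \<in> proj_chart None}" for i
    using openin_continuous_map_preimage[OF _ openin_proj_chart] by fastforce
  moreover have "{(t, l). l \<in> affine_shears (L t)} = (\<Inter>i. {x. shear (snd x) ` L (fst x) i \<in> proj_chart None})"
    by (auto simp: affine_shears_def)
  ultimately show ?thesis
    by (auto intro: open_INT)
qed

text \<open>
  Clamping to \<open>[0, 1]\<close> makes everything live over all of \<open>\<real>\<close>: the fibration argument needs a
  connected open base, and \<open>homotopic_with\<close> compares maps at every real argument.
\<close>
lemma exists_affine_shear_path:
  fixes q :: "real \<Rightarrow> 'n::finite \<Rightarrow> (complex^('m::finite option)) set"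
  assumes q: "\<And>i. continuous_map (top_of_set {0..1}) proj_topology (\<lambda>t. q t i)"
    and q0: "0 \<in> affine_shears (q 0)" and q1: "0 \<in> affine_shears (q 1)"
  obtains \<tau> :: "real \<Rightarrow> real" and \<mu> :: "real \<Rightarrow> complex^'m"
  where "continuous_on UNIV \<tau>" "\<And>u. \<tau> u \<in> {0..1}" "\<tau> 0 = 0" "\<tau> 1 = 1"
    and "continuous_on UNIV \<mu>" "\<mu> 0 = 0" "\<mu> 1 = 0"
    and "\<And>u. \<mu> u \<in> affine_shears (q (\<tau> u))"
proof -
  define c :: "real \<Rightarrow> real" where "c = clamp 0 1"
  have c_range: "c t \<in> {0..1}" for t
    using clamp_in_interval[of 0 1 t] by (simp add: c_def)
  have c_cont: "continuous_on UNIV c"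
    using clamp_continuous_on[of 0 1 "\<lambda>x. x"] by (simp add: c_def)
  have c_ends: "c 0 = 0" "c 1 = 1"
    by (simp_all add: c_def)
  define G where "G = {(t, l). l \<in> affine_shears (q (c t))}"
  have "continuous_map euclidean (top_of_set {0..1}) c"
    using c_range c_cont by (auto simp: continuous_map_in_subtopology)
  then have "open G"
    unfolding G_def using continuous_map_compose[OF _ q] by (intro open_affine_shears_graph) (simp add: o_def)
  moreover have "q (c t) i \<in> projsp" for t i
    using q c_range continuous_map_image_subset_topspace topspace_proj_topology by fastforce
  ultimately have "path_connected G"
    by (intro path_connected_open_fibred)
      (auto simp: G_def ex_in_conv affine_shears_nonempty path_connected_affine_shears path_connected_imp_connected)
  moreover have "(0, 0) \<in> G" "(1, 0) \<in> G"
    using q0 q1 c_ends by (simp_all add: G_def)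
  ultimately obtain \<Gamma> where \<Gamma>: "path \<Gamma>" "path_image \<Gamma> \<subseteq> G" "pathstart \<Gamma> = (0, 0)" "pathfinish \<Gamma> = (1, 0)"
    unfolding path_connected_def by blast
  have \<Gamma>_cont: "continuous_on UNIV (\<lambda>u. \<Gamma> (c u))"
    using \<Gamma>(1) c_range unfolding path_def by (intro continuous_on_compose2[OF _ c_cont]) auto
  have "\<Gamma> (c u) \<in> G" for u
    using \<Gamma>(2) c_range by (auto simp: path_image_def)
  then have "snd (\<Gamma> (c u)) \<in> affine_shears (q (c (fst (\<Gamma> (c u)))))" for u
    by (simp add: G_def case_prod_beta)
  then show thesis
    using \<Gamma>(3,4) c_range c_ends
    by (intro that[of "\<lambda>u. c (fst (\<Gamma> (c u)))" "\<lambda>u. snd (\<Gamma> (c u))"] continuous_on_compose2[OF c_cont]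
        continuous_intros \<Gamma>_cont) (auto simp: pathstart_def pathfinish_def)
qed

definition affine_coords :: "(complex^('m::finite option)) set \<Rightarrow> complex^'m" where
  "affine_coords L = (\<chi> j. chart_rep None L $ Some j)"

lemma cline_aff_embed_affine_coords:
  assumes "L \<in> proj_chart None"
  shows "cline (aff_embed (affine_coords L)) = L"
proof -
  have "aff_embed (affine_coords L) = chart_rep None L"
    using chart_rep_nth[OF assms] by (simp add: vec_option_eq_iff affine_coords_def)
  then show ?thesis
    using cline_chart_rep[OF assms] by simp
qed

lemma affine_coords_cline_aff_embed [simp]: "affine_coords (cline (aff_embed x)) = x"
  by (simp add: affine_coords_def chart_rep_cline vec_eq_iff)

lemma in_span_lines_imp_combination:
  fixes w :: "'i \<Rightarrow> complex^'k::finite"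
  assumes "finite S" and "y \<in> vec.span (\<Union>i\<in>S. cline (w i))"
  shows "\<exists>c. y = (\<Sum>i\<in>S. c i *s w i)"
  using assms(2)
proof (induction rule: vec.span_induct_alt)
  case base
  show ?case
    by (intro exI[of _ "\<lambda>_. 0"]) simp
next
  case (step a x y)
  obtain i0 d where i0: "i0 \<in> S" "x = d *s w i0"
    using step(1) by (auto simp: mem_cline)
  obtain c where c: "y = (\<Sum>i\<in>S. c i *s w i)"
    using step(2) by blast
  have delta: "(\<Sum>i\<in>S. (if i = i0 then a * d else 0) *s w i) = (a * d) *s w i0"
    using i0(1) assms(1) by (simp add: if_distrib[of "\<lambda>r. r *s _"] cong: if_cong)
  show ?case
  proof
    show "a *s x + y = (\<Sum>i\<in>S. (c i + (if i = i0 then a * d else 0)) *s w i)"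
      using delta by (simp add: c i0(2) vector_smult_assoc vec.scale_left_distrib sum.distrib add.commute)
  qed
qed

lemma incl_XY_in_Ysp_imp_Xsp:
  fixes x :: "(complex^'m::finite)^'n::finite"
  assumes "incl_XY x \<in> Ysp"
  shows "x \<in> Xsp"
  unfolding Xsp_def
proof (intro CollectI allI impI)
  fix S :: "'n set"
  assume "card S = CARD('m) + 1"
  then have span: "vec.span (\<Union>i\<in>S. cline (aff_embed (x $ i))) = UNIV"
    using assms unfolding Ysp_def incl_XY_def by blast
  have "y \<in> caff_hull x S" for y
  proof -
    obtain c where c: "aff_embed y = (\<Sum>i\<in>S. c i *s aff_embed (x $ i))"
      using in_span_lines_imp_combination[where w = "\<lambda>i. aff_embed (x $ i)" and y = "aff_embed y"] span
      by auto
    have "sum c S = 1"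
      using arg_cong[OF c, of "\<lambda>v. v $ None"] by simp
    moreover have "y = (\<Sum>i\<in>S. c i *s x $ i)"
      unfolding vec_eq_iff
    proof
      fix j
      show "y $ j = (\<Sum>i\<in>S. c i *s x $ i) $ j"
        using arg_cong[OF c, of "\<lambda>v. v $ Some j"] by simp
    qed
    ultimately show ?thesis
      unfolding caff_hull_def by blast
  qed
  then show "caff_hull x S = UNIV"
    by blast
qed

lemma continuous_map_Ytop_iff:
  "continuous_map X Ytop f \<longleftrightarrow>
     (\<forall>i. continuous_map X proj_topology (\<lambda>x. f x i)) \<and> f \<in> topspace X \<rightarrow> Ysp"
  unfolding Ytop_def continuous_map_in_subtopology continuous_map_componentwise_UNIV ..

lemma homotopic_loops_in_imp_loop_in: "homotopic_loops_in T a p q \<Longrightarrow> loop_in T a p"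
  unfolding homotopic_loops_in_def loop_in_def pathin_def
  by (metis (mono_tags, lifting) homotopic_with_imp_continuous_maps homotopic_with_imp_property)

lemma lift_loop_into_Xtop:
  fixes F :: "real \<Rightarrow> 'n::finite \<Rightarrow> (complex^('m::finite option)) set"
  assumes F: "loop_in Ytop (incl_XY x0) F" and F_chart: "\<And>u i. F u i \<in> proj_chart None"
  obtains p where "loop_in Xtop x0 p" and "incl_XY \<circ> p = F"
proof -
  define p where "p u = (\<chi> i. affine_coords (F u i))" for u
  have incl_p: "incl_XY (p u) = F u" for u
    by (simp add: p_def incl_XY_def fun_eq_iff cline_aff_embed_affine_coords F_chart)
  have F_cont: "continuous_map (top_of_set {0..1}) proj_topology (\<lambda>u. F u i)"
    and F_Ysp: "u \<in> {0..1} \<Longrightarrow> F u \<in> Ysp" for u i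
    using F by (auto simp: loop_in_def pathin_def continuous_map_Ytop_iff)
  have "continuous_on {0..1} (\<lambda>u. chart_rep None (F u i))" for i
  proof -
    have "continuous_map (top_of_set {0..1}) (subtopology proj_topology (proj_chart None)) (\<lambda>u. F u i)"
      using F_cont F_chart by (simp add: continuous_map_in_subtopology)
    then have "continuous_map (top_of_set {0..1}) euclidean (chart_rep None \<circ> (\<lambda>u. F u i))"
      using continuous_map_chart_rep by (rule continuous_map_compose)
    then show ?thesis
      by (simp add: o_def)
  qed
  then have "continuous_on {0..1} p"
    unfolding p_def affine_coords_def by (intro continuous_intros)
  moreover have "p u \<in> Xsp" if "u \<in> {0..1}" for u
    using F_Ysp[OF that] incl_p by (intro incl_XY_in_Ysp_imp_Xsp) simp
  moreover have "p 0 = x0" "p 1 = x0"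
    using F by (simp_all add: p_def loop_in_def incl_XY_def vec_eq_iff)
  ultimately have "loop_in Xtop x0 p"
    by (auto simp: loop_in_def pathin_def Xtop_def continuous_map_in_subtopology)
  moreover have "incl_XY \<circ> p = F"
    using incl_p by auto
  ultimately show thesis
    using that by blast
qed

lemma homotopic_loops_shear_reparametrization:
  assumes q: "loop_in Ytop y0 q"
    and \<tau>: "continuous_on UNIV \<tau>" "\<And>u. \<tau> u \<in> {0..1}" "\<tau> 0 = 0" "\<tau> 1 = 1"
    and \<mu>: "continuous_on UNIV \<mu>" "\<mu> 0 = 0" "\<mu> 1 = 0"
  shows "homotopic_loops_in Ytop y0 (\<lambda>u i. shear (\<mu> u) ` q (\<tau> u) i) q"
proof -
  define r where "r x = (1 - fst x) * \<tau> (snd x) + fst x * snd x" for x :: "real \<times> real"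
  define h where "h x i = shear (complex_of_real (1 - fst x) *s \<mu> (snd x)) ` q (r x) i" for x i
  have q_cont: "continuous_map (top_of_set {0..1}) proj_topology (\<lambda>t. q t i)"
    and q_Ysp: "t \<in> {0..1} \<Longrightarrow> q t \<in> Ysp" for t i
    using q by (auto simp: loop_in_def pathin_def continuous_map_Ytop_iff)
  have r_range: "r x \<in> {0..1}" if "x \<in> {0..1} \<times> {0..1}" for x
    using that \<tau>(2)[of "snd x"] convexD[OF convex_real_interval(5), of "\<tau> (snd x)" 0 1 "snd x" "1 - fst x" "fst x"]
    by (auto simp: r_def)
  then have "continuous_map (top_of_set ({0..1} \<times> {0..1})) (top_of_set {0..1}) r"
    unfolding r_def continuous_map_in_subtopology
    by (auto intro!: continuous_intros continuous_on_compose2[OF \<tau>(1)])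
  then have "continuous_map (top_of_set ({0..1} \<times> {0..1})) proj_topology (\<lambda>x. h x i)" for i
    unfolding h_def
    by (intro continuous_map_shear_image continuous_map_compose[OF _ q_cont, unfolded o_def])
      (auto intro!: continuous_intros continuous_on_compose2[OF \<mu>(1)])
  moreover have "h x \<in> Ysp" if "x \<in> {0..1} \<times> {0..1}" for x
    unfolding h_def using q_Ysp[OF r_range[OF that]] by (rule shear_image_Ysp)
  ultimately have "continuous_map (prod_topology (top_of_set {0..1}) (top_of_set {0..1})) Ytop h"
    by (auto simp: continuous_map_Ytop_iff)
  moreover have "h (0, u) = (\<lambda>i. shear (\<mu> u) ` q (\<tau> u) i)" "h (1, u) = q u" for u
    by (simp_all add: fun_eq_iff h_def r_def)
  moreover have "h (s, 0) = y0" "h (s, 1) = y0" for s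
    using q \<tau>(3,4) \<mu>(2,3) by (simp_all add: fun_eq_iff h_def r_def loop_in_def)
  ultimately show ?thesis
    unfolding homotopic_loops_in_def homotopic_with_def by blast
qed

theorem lemma2p1:
  assumes "CARD('n::finite) \<ge> CARD('m::finite) + 1"
  shows "\<forall>x0 \<in> (Xsp :: ((complex^'m)^'n) set).
           pi1_surjective Xtop Ytop (incl_XY :: (complex^'m)^'n \<Rightarrow> _) x0"
  unfolding pi1_surjective_def
proof (intro ballI allI impI)
  fix x0 :: "(complex^'m)^'n" and q
  assume q: "loop_in Ytop (incl_XY x0) q"
  then have q_cont: "continuous_map (top_of_set {0..1}) proj_topology (\<lambda>t. q t i)" for i
    by (simp add: loop_in_def pathin_def continuous_map_Ytop_iff)
  have q_ends: "0 \<in> affine_shears (q 0)" "0 \<in> affine_shears (q 1)"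
    using q zero_in_affine_shears_incl_XY by (simp_all add: loop_in_def)
  obtain \<tau> :: "real \<Rightarrow> real" and \<mu> :: "real \<Rightarrow> complex^'m"
    where \<tau>: "continuous_on UNIV \<tau>" "\<And>u. \<tau> u \<in> {0..1}" "\<tau> 0 = 0" "\<tau> 1 = 1"
      and \<mu>: "continuous_on UNIV \<mu>" "\<mu> 0 = 0" "\<mu> 1 = 0"
      and affine: "\<And>u. \<mu> u \<in> affine_shears (q (\<tau> u))"
    using exists_affine_shear_path[of q, OF q_cont q_ends] by blast
  define F where "F = (\<lambda>u i. shear (\<mu> u) ` q (\<tau> u) i)"
  have hom: "homotopic_loops_in Ytop (incl_XY x0) F q"
    unfolding F_def using q \<tau> \<mu> by (rule homotopic_loops_shear_reparametrization)
  then have "loop_in Ytop (incl_XY x0) F"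
    by (rule homotopic_loops_in_imp_loop_in)
  moreover have "F u i \<in> proj_chart None" for u i
    using affine by (simp add: F_def affine_shears_def)
  ultimately obtain p where "loop_in Xtop x0 p" and "incl_XY \<circ> p = F"
    by (rule lift_loop_into_Xtop)
  with hom show "\<exists>p. loop_in Xtop x0 p \<and> homotopic_loops_in Ytop (incl_XY x0) (incl_XY \<circ> p) q"
    by blast
qed

end
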